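(* Let $\mathcal{G}_{55}$ be the network described in the context, with nodes $(i,j)$, $1\le i,j\le 5$. Define $5\times5$ $0/1$ matrices $M_1=I_5$, $M_2$ with ones exactly at positions $(1,2),(2,3),(3,4),(4,5),(5,1)$, $M_3$ with ones exactly at $(1,3),(2,5),(3,2),(4,1),(5,4)$, $M_4$ with ones exactly at $(1,4),(2,1),(3,5),(4,3),(5,2)$, $M_5$ with ones exactly at $(1,5),(2,4),(3,1),(4,2),(5,3)$. Let $K$ be the 5-coloring of the nodes in which node $(i,j)$ has color $k$ iff $(M_k)_{ij}=1$. Then $K$ is balanced, but $K$ is not an orbit coloring, i.e. there is no subgroup $\Sigma\subseteq\mathbb{S}_5\times\mathbb{S}_5$ whose orbits on the nodes are exactly the color classes of $K$.
   Context: For integers $m,n\ge1$, the network $\mathcal{G}_{mn}$ has node set $\{(i,j):1\le i\le m,\ 1\le j\le n\}$ ($i$ indexes rows, $j$ columns), all nodes of the same type. For each ordered pair of distinct nodes $(c,d)$ there is exactly one arrow with head $c$ and tail $d$, whose type is: "row" if $c,d$ lie in the same row, "column" if they lie in the same column, "diagonal" otherwise; in addition each node has an internal arrow from itself to itself (a fourth type). The group $\mathbb{S}_m\times\mathbb{S}_n$ acts on the nodes by $(\sigma,\tau)\cdot(i,j)=(\sigma(i),\tau(j))$; it is the symmetry group of $\mathcal{G}_{mn}$. A coloring is a map from nodes to a set of colors (identified up to the partition it induces). A coloring is balanced if whenever nodes $c,d$ have the same color, for every arrow type and every color $k$ the number of input arrows of that type to $c$ with tail of color $k$ equals the corresponding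 number for $d$. For a subgroup $\Sigma$ of the symmetry group, the orbit coloring of $\Sigma$ has as color classes the $\Sigma$-orbits on nodes; a coloring is an orbit coloring if it is the orbit coloring of some such subgroup. *)

theory Defs
  imports "HOL-Combinatorics.Permutations"
begin

definition nodes :: "nat \<Rightarrow> nat \<Rightarrow> (nat \<times> nat) set" where
  "nodes m n = {1..m} \<times> {1..n}"

datatype arrow_type = RowArrow | ColArrow | DiagArrow | InternalArrow

text \<open>Type of the unique arrow with head c and tail d (internal arrow if c = d).\<close>
definition arrow_type_of :: "nat \<times> nat \<Rightarrow> nat \<times> nat \<Rightarrow> arrow_type" where
  "arrow_type_of c d =
     (if c = d then InternalArrow
      else if fst c = fst d then RowArrow
      else if snd c = snd d then ColArrow
      else DiagArrow)"

definition balanced :: "nat \<Rightarrow> nat \<Rightarrow> (nat \<times> nat \<Rightarrow> 'k) \<Rightarrow> bool" where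
  "balanced m n col \<longleftrightarrow>
     (\<forall>c\<in>nodes m n. \<forall>d\<in>nodes m n. col c = col d \<longrightarrow>
        (\<forall>t k. card {e \<in> nodes m n. arrow_type_of c e = t \<and> col e = k}
             = card {e \<in> nodes m n. arrow_type_of d e = t \<and> col e = k}))"

definition sym_subgroup :: "nat \<Rightarrow> nat \<Rightarrow> ((nat \<Rightarrow> nat) \<times> (nat \<Rightarrow> nat)) set \<Rightarrow> bool" where
  "sym_subgroup m n S \<longleftrightarrow>
     (id, id) \<in> S \<and>
     (\<forall>g\<in>S. fst g permutes {1..m} \<and> snd g permutes {1..n}) \<and>
     (\<forall>g\<in>S. \<forall>h\<in>S. (fst g \<circ> fst h, snd g \<circ> snd h) \<in> S) \<and>
     (\<forall>g\<in>S. (inv (fst g), inv (snd g)) \<in> S)"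

definition act :: "(nat \<Rightarrow> nat) \<times> (nat \<Rightarrow> nat) \<Rightarrow> nat \<times> nat \<Rightarrow> nat \<times> nat" where
  "act g c = (fst g (fst c), snd g (snd c))"

definition orbit_coloring :: "nat \<Rightarrow> nat \<Rightarrow> (nat \<times> nat \<Rightarrow> 'k) \<Rightarrow> bool" where
  "orbit_coloring m n col \<longleftrightarrow>
     (\<exists>S. sym_subgroup m n S \<and>
        (\<forall>c\<in>nodes m n. \<forall>d\<in>nodes m n. col c = col d \<longleftrightarrow> (\<exists>g\<in>S. act g c = d)))"

definition Mpos :: "nat \<Rightarrow> (nat \<times> nat) set" where
  "Mpos k =
    (if k = 1 then {(1,1),(2,2),(3,3),(4,4),(5,5)}
     else if k = 2 then {(1,2),(2,3),(3,4),(4,5),(5,1)}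
     else if k = 3 then {(1,3),(2,5),(3,2),(4,1),(5,4)}
     else if k = 4 then {(1,4),(2,1),(3,5),(4,3),(5,2)}
     else if k = 5 then {(1,5),(2,4),(3,1),(4,2),(5,3)}
     else {})"

definition K :: "nat \<times> nat \<Rightarrow> nat" where
  "K c = (THE k. k \<in> {1..5} \<and> c \<in> Mpos k)"

end

(*
  K is a Latin square: each color occurs exactly once in every row and every column.
  In a Latin square the number of inputs of a given arrow type and color that a node
  receives depends only on the node's own color, so the coloring is balanced.
  If K were the orbit coloring of a subgroup, some color-preserving symmetry (sigma, tau)
  would map (1,1) to (2,2). A color determines its position within a row or a column,
  which forces tau 2 = 3, sigma 2 = 3 and tau 3 = 5; then (2,3), of color 2, would be
  mapped to (3,5), of color 4.
*)
theory Submission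
  imports Defs
begin

definition latin_square :: "nat \<Rightarrow> 'k set \<Rightarrow> (nat \<times> nat \<Rightarrow> 'k) \<Rightarrow> bool" where
  "latin_square n C col \<longleftrightarrow>
     (\<forall>i\<in>{1..n}. bij_betw (\<lambda>j. col (i, j)) {1..n} C) \<and>
     (\<forall>j\<in>{1..n}. bij_betw (\<lambda>i. col (i, j)) {1..n} C)"

lemma card_fiber_bij_betw_remove:
  assumes "bij_betw f A B" "x \<in> A"
  shows "card {y \<in> A - {x}. f y = k} = of_bool (k \<in> B \<and> k \<noteq> f x)"
proof -
  have bij: "bij_betw f (A - {x}) (B - {f x})"
    using assms by (intro bij_betw_DiffI) (auto simp: bij_betw_def)
  show ?thesis
  proof (cases "k \<in> B - {f x}")
    case True
    then have "k \<in> f ` (A - {x})"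
      using bij by (simp add: bij_betw_def)
    then obtain y where "y \<in> A - {x}" "f y = k"
      by blast
    then have "{y \<in> A - {x}. f y = k} = {y}"
      using bij by (auto simp: bij_betw_def inj_on_def)
    then show ?thesis using True by simp
  next
    case False
    then have empty: "{y \<in> A - {x}. f y = k} = {}"
      using bij by (auto simp: bij_betw_def)
    show ?thesis
      unfolding empty using False by simp
  qed
qed

lemma latin_square_row_inj:
  assumes "latin_square n C col" "i \<in> {1..n}" "j \<in> {1..n}" "j' \<in> {1..n}"
    and "col (i, j) = col (i, j')"
  shows "j = j'"
  using assms unfolding latin_square_def bij_betw_def inj_on_def by blast

lemma latin_square_col_inj:
  assumes "latin_square n C col" "j \<in> {1..n}" "i \<in> {1..n}" "i' \<in> {1..n}"
    and "col (i, j) = col (i', j)"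
  shows "i = i'"
  using assms unfolding latin_square_def bij_betw_def inj_on_def by blast

lemma card_internal_inputs:
  assumes "c \<in> nodes n n"
  shows "card {e \<in> nodes n n. arrow_type_of c e = InternalArrow \<and> col e = k}
    = of_bool (col c = k)"
proof -
  have "{e \<in> nodes n n. arrow_type_of c e = InternalArrow \<and> col e = k}
      = (if col c = k then {c} else {})"
    using assms by (auto simp: arrow_type_of_def)
  then show ?thesis by simp
qed

lemma card_row_inputs:
  assumes "latin_square n C col" "(a, b) \<in> nodes n n"
  shows "card {e \<in> nodes n n. arrow_type_of (a, b) e = RowArrow \<and> col e = k}
    = of_bool (k \<in> C \<and> k \<noteq> col (a, b))"
proof -
  have "{e \<in> nodes n n. arrow_type_of (a, b) e = RowArrow \<and> col e = k}
      = Pair a ` {j \<in> {1..n} - {b}. col (a, j) = k}"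
    using assms(2) by (auto simp: nodes_def arrow_type_of_def)
  then have "card {e \<in> nodes n n. arrow_type_of (a, b) e = RowArrow \<and> col e = k}
      = card {j \<in> {1..n} - {b}. col (a, j) = k}"
    by (simp add: card_image inj_on_def)
  also have "\<dots> = of_bool (k \<in> C \<and> k \<noteq> col (a, b))"
    using assms by (intro card_fiber_bij_betw_remove) (auto simp: latin_square_def nodes_def)
  finally show ?thesis .
qed

lemma card_col_inputs:
  assumes "latin_square n C col" "(a, b) \<in> nodes n n"
  shows "card {e \<in> nodes n n. arrow_type_of (a, b) e = ColArrow \<and> col e = k}
    = of_bool (k \<in> C \<and> k \<noteq> col (a, b))"
proof -
  have "{e \<in> nodes n n. arrow_type_of (a, b) e = ColArrow \<and> col e = k}
      = (\<lambda>i. (i, b)) ` {i \<in> {1..n} - {a}. col (i, b) = k}"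
    using assms(2) by (auto simp: nodes_def arrow_type_of_def)
  then have "card {e \<in> nodes n n. arrow_type_of (a, b) e = ColArrow \<and> col e = k}
      = card {i \<in> {1..n} - {a}. col (i, b) = k}"
    by (simp add: card_image inj_on_def)
  also have "\<dots> = of_bool (k \<in> C \<and> k \<noteq> col (a, b))"
    using assms by (intro card_fiber_bij_betw_remove) (auto simp: latin_square_def nodes_def)
  finally show ?thesis .
qed

lemma card_diag_inputs:
  assumes latin: "latin_square n C col" and c: "(a, b) \<in> nodes n n"
  shows "card {e \<in> nodes n n. arrow_type_of (a, b) e = DiagArrow \<and> col e = k}
    = (if k \<in> C then n - 1 - of_bool (k \<noteq> col (a, b)) else 0)"
proof -
  let ?R = "{1..n} - {a}"
  have rows: "bij_betw (\<lambda>j. col (i, j)) {1..n} C" if "i \<in> ?R" for i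
    using latin that by (simp add: latin_square_def)
  have column: "bij_betw (\<lambda>i. col (i, b)) {1..n} C"
    using latin c by (simp add: latin_square_def nodes_def)
  have "{e \<in> nodes n n. arrow_type_of (a, b) e = DiagArrow \<and> col e = k}
      = Sigma ?R (\<lambda>i. {j \<in> {1..n} - {b}. col (i, j) = k})"
    by (auto simp: nodes_def arrow_type_of_def)
  then have "card {e \<in> nodes n n. arrow_type_of (a, b) e = DiagArrow \<and> col e = k}
      = (\<Sum>i\<in>?R. card {j \<in> {1..n} - {b}. col (i, j) = k})"
    by simp
  also have "\<dots> = (\<Sum>i\<in>?R. of_bool (k \<in> C \<and> k \<noteq> col (i, b)))"
    using c rows by (intro sum.cong refl card_fiber_bij_betw_remove) (auto simp: nodes_def)
  also have "\<dots> = card (?R \<inter> {i. k \<in> C \<and> k \<noteq> col (i, b)})"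
    by simp
  also have "\<dots> = (if k \<in> C then n - 1 - of_bool (k \<noteq> col (a, b)) else 0)"
  proof (cases "k \<in> C")
    case True
    have "?R \<inter> {i. k \<in> C \<and> k \<noteq> col (i, b)} = ?R - {i \<in> ?R. col (i, b) = k}"
      using True by auto
    moreover have "card {i \<in> ?R. col (i, b) = k} = of_bool (k \<noteq> col (a, b))"
      using card_fiber_bij_betw_remove[OF column, of a k] c True by (simp add: nodes_def)
    moreover have "card (?R - {i \<in> ?R. col (i, b) = k}) = card ?R - card {i \<in> ?R. col (i, b) = k}"
      by (rule card_Diff_subset) auto
    ultimately show ?thesis
      using c True by (simp add: nodes_def)
  qed simp
  finally show ?thesis .
qed

lemma latin_square_balanced:
  assumes latin: "latin_square n C col"
  shows "balanced n n col"
  unfolding balanced_def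
proof (intro ballI impI allI)
  fix c d t k
  assume c: "c \<in> nodes n n" and d: "d \<in> nodes n n" and same: "col c = col d"
  obtain a b a' b' where ab: "c = (a, b)" and ab': "d = (a', b')"
    by fastforce
  show "card {e \<in> nodes n n. arrow_type_of c e = t \<and> col e = k}
      = card {e \<in> nodes n n. arrow_type_of d e = t \<and> col e = k}"
    using c d same unfolding ab ab'
    by (cases t) (simp_all add: card_internal_inputs card_row_inputs[OF latin]
        card_col_inputs[OF latin] card_diag_inputs[OF latin])
qed

lemma orbit_coloring_symmetry:
  assumes "orbit_coloring m n col" "c \<in> nodes m n" "d \<in> nodes m n" "col c = col d"
  obtains \<sigma> \<tau> where "\<sigma> permutes {1..m}" "\<tau> permutes {1..n}" "act (\<sigma>, \<tau>) c = d"
    "\<And>e. e \<in> nodes m n \<Longrightarrow> col (act (\<sigma>, \<tau>) e) = col e"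
proof -
  obtain S where S: "sym_subgroup m n S"
    and orbits: "\<forall>c\<in>nodes m n. \<forall>d\<in>nodes m n. col c = col d \<longleftrightarrow> (\<exists>g\<in>S. act g c = d)"
    using assms(1) unfolding orbit_coloring_def by blast
  obtain g where g: "g \<in> S" "act g c = d"
    using orbits assms(2-4) by blast
  have perms: "fst g permutes {1..m}" "snd g permutes {1..n}"
    using S g(1) by (auto simp: sym_subgroup_def)
  have "col (act g e) = col e" if e: "e \<in> nodes m n" for e
  proof -
    have "act g e \<in> nodes m n"
      using e perms
      by (auto simp: act_def nodes_def mem_Times_iff permutes_in_image simp del: atLeastAtMost_iff)
    then show ?thesis
      using orbits e g(1) by metis
  qed
  then show thesis
    using that[of "fst g" "snd g"] perms g(2) by simp
qed

lemma Mpos_disjoint: "c \<in> Mpos k \<Longrightarrow> c \<in> Mpos k' \<Longrightarrow> k = k'"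
  unfolding Mpos_def by (cases c) (simp split: if_splits; elim disjE; simp)

lemma K_eqI:
  assumes "k \<in> {1..5}" "c \<in> Mpos k"
  shows "K c = k"
  unfolding K_def using assms Mpos_disjoint by (intro the_equality) blast+

lemma K_table:
  assumes "i \<in> {1..5}" "j \<in> {1..5}"
  shows "K (i, j) =
    [[1,2,3,4,5],
     [4,1,2,5,3],
     [5,3,1,2,4],
     [3,5,4,1,2],
     [2,4,5,3,1]] ! (i - 1) ! (j - 1)"
proof -
  have "i = 1 \<or> i = 2 \<or> i = 3 \<or> i = 4 \<or> i = 5" "j = 1 \<or> j = 2 \<or> j = 3 \<or> j = 4 \<or> j = 5"
    using assms by auto
  then show ?thesis
    by (elim disjE) (simp_all, (rule K_eqI; simp add: Mpos_def)+)
qed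

lemma latin_square_K: "latin_square 5 {1..5} K"
proof -
  have five: "{1..5::nat} = {1, 2, 3, 4, 5}"
    by auto
  have rows: "(\<lambda>j. K (i, j)) ` {1..5} = {1..5}" if "i \<in> {1..5}" for i
  proof -
    have "i = 1 \<or> i = 2 \<or> i = 3 \<or> i = 4 \<or> i = 5"
      using that by auto
    then show ?thesis
      unfolding five by (elim disjE) (auto simp: K_table)
  qed
  have cols: "(\<lambda>i. K (i, j)) ` {1..5} = {1..5}" if "j \<in> {1..5}" for j
  proof -
    have "j = 1 \<or> j = 2 \<or> j = 3 \<or> j = 4 \<or> j = 5"
      using that by auto
    then show ?thesis
      unfolding five by (elim disjE) (auto simp: K_table)
  qed
  show ?thesis
    unfolding latin_square_def bij_betw_def using rows cols by (simp add: finite_surj_inj)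
qed

lemma not_orbit_coloring_K: "\<not> orbit_coloring 5 5 K"
proof
  assume orbit: "orbit_coloring 5 5 K"
  have nodes: "(1, 1) \<in> nodes 5 5" "(2, 2) \<in> nodes 5 5" and same: "K (1, 1) = K (2, 2)"
    by (simp_all add: nodes_def K_table)
  obtain \<sigma> \<tau> where perms: "\<sigma> permutes {1..5}" "\<tau> permutes {1..5}"
    and moves: "act (\<sigma>, \<tau>) (1, 1) = (2, 2)"
    and preserves: "\<And>e. e \<in> nodes 5 5 \<Longrightarrow> K (act (\<sigma>, \<tau>) e) = K e"
    using orbit_coloring_symmetry[OF orbit nodes same] by blast
  have \<sigma>1: "\<sigma> 1 = 2" and \<tau>1: "\<tau> 1 = 2"
    using moves by (simp_all add: act_def)
  have in_range: "\<sigma> i \<in> {1..5}" "\<tau> i \<in> {1..5}" if "i \<in> {1..5}" for i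
    using perms that by (simp_all add: permutes_in_image del: atLeastAtMost_iff)
  have K_moved: "K (\<sigma> i, \<tau> j) = K (i, j)" if "i \<in> {1..5}" "j \<in> {1..5}" for i j
    using preserves[of "(i, j)"] that by (simp add: act_def nodes_def)
  have "K (2, \<tau> 2) = K (2, 3)"
    using K_moved[of 1 2] \<sigma>1 by (simp add: K_table)
  then have \<tau>2: "\<tau> 2 = 3"
    using latin_square_row_inj[OF latin_square_K, of 2 "\<tau> 2" 3] in_range(2)[of 2] by simp
  have "K (\<sigma> 2, 3) = K (3, 3)"
    using K_moved[of 2 2] \<tau>2 by (simp add: K_table)
  then have \<sigma>2: "\<sigma> 2 = 3"
    using latin_square_col_inj[OF latin_square_K, of 3 "\<sigma> 2" 3] in_range(1)[of 2] by simp
  have "K (2, \<tau> 3) = K (2, 5)"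
    using K_moved[of 1 3] \<sigma>1 by (simp add: K_table)
  then have \<tau>3: "\<tau> 3 = 5"
    using latin_square_row_inj[OF latin_square_K, of 2 "\<tau> 3" 5] in_range(2)[of 3] by simp
  have "K (3, 5) = K (2, 3)"
    using K_moved[of 2 3] \<sigma>2 \<tau>3 by simp
  then show False
    by (simp add: K_table)
qed

theorem mainTheorem2:
  shows "balanced 5 5 K \<and> \<not> orbit_coloring 5 5 K"
  using latin_square_balanced[OF latin_square_K] not_orbit_coloring_K by simp

end
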